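(* Let $(R,\mathfrak m)$ be a Noetherian local ring, $X$ a finitely generated $R$-module, $N$ a Burch submodule of $X$, $t\ge1$ an integer, and $M$ a finitely generated $R$-module with $\operatorname{Tor}_t^R(M,N)=\operatorname{Tor}_t^R(M,X/N)=0$. Then $\operatorname{pd}_R M<t$.
   Context: For a submodule $N\subseteq X$, $(N:_X\mathfrak m)=\{x\in X:\mathfrak m x\subseteq N\}$. $N$ is a Burch submodule of $X$ if $\mathfrak m(N:_X\mathfrak m)\neq\mathfrak m N$. The projective dimension of the zero module is $-\infty$. *)

theory Defs
  imports Main "HOL-Library.Extended_Real"
begin

(* The ring R is the whole type 'a :: comm_ring_1.  An R-module is a type 'b :: ab_group_add
   together with a scalar multiplication  s :: 'a => 'b => 'b  satisfying  module s  (HOL/Modules). *)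

definition ring_ideal :: "'a::comm_ring_1 set \<Rightarrow> bool" where
  "ring_ideal I \<longleftrightarrow> module.subspace ((*) :: 'a \<Rightarrow> 'a \<Rightarrow> 'a) I"

definition noetherian_ring :: "'a::comm_ring_1 itself \<Rightarrow> bool" where
  "noetherian_ring _ \<longleftrightarrow>
     (\<forall>I :: 'a set. ring_ideal I \<longrightarrow>
        (\<exists>S. finite S \<and> S \<subseteq> I \<and> I = module.span ((*) :: 'a \<Rightarrow> 'a \<Rightarrow> 'a) S))"

definition maximal_ideal :: "'a::comm_ring_1 set \<Rightarrow> bool" where
  "maximal_ideal m \<longleftrightarrow> ring_ideal m \<and> m \<noteq> UNIV \<and>
     (\<forall>J. ring_ideal J \<and> m \<subseteq> J \<longrightarrow> J = m \<or> J = UNIV)"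

definition local_ring :: "'a::comm_ring_1 itself \<Rightarrow> bool" where
  "local_ring _ \<longleftrightarrow> (\<exists>!m :: 'a set. maximal_ideal m)"

definition fin_gen_module :: "('a::comm_ring_1 \<Rightarrow> 'b::ab_group_add \<Rightarrow> 'b) \<Rightarrow> bool" where
  "fin_gen_module s \<longleftrightarrow> module s \<and> (\<exists>S. finite S \<and> module.span s S = UNIV)"

definition ideal_times :: "('a::comm_ring_1 \<Rightarrow> 'b::ab_group_add \<Rightarrow> 'b) \<Rightarrow> 'a set \<Rightarrow> 'b set \<Rightarrow> 'b set" where
  "ideal_times s I L = module.span s {s r x | r x. r \<in> I \<and> x \<in> L}"

definition colon_sub :: "('a::comm_ring_1 \<Rightarrow> 'b::ab_group_add \<Rightarrow> 'b) \<Rightarrow> 'b set \<Rightarrow> 'a set \<Rightarrow> 'b set" where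
  "colon_sub s N m = {x. \<forall>r\<in>m. s r x \<in> N}"

definition burch_submodule :: "('a::comm_ring_1 \<Rightarrow> 'b::ab_group_add \<Rightarrow> 'b) \<Rightarrow> 'a set \<Rightarrow> 'b set \<Rightarrow> bool" where
  "burch_submodule s m N \<longleftrightarrow> module.subspace s N \<and>
     ideal_times s m (colon_sub s N m) \<noteq> ideal_times s m N"

(* R^k is represented by vectors  v :: nat => 'a  with  v j = 0  for  j >= k.
   A resolution of M is given by ranks  rk i  (F_i = R^(rk i)), matrices  d i  (d i j l is the
   (j,l) entry of  d_i : F_i -> F_(i-1), i >= 1), and the images  e l  in M of the standard basis
   of F_0 (the augmentation F_0 -> M). *)

definition fvecs :: "nat \<Rightarrow> (nat \<Rightarrow> 'a::zero) set" where
  "fvecs k = {v. \<forall>j\<ge>k. v j = 0}"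

definition mat_app ::
  "('a::comm_ring_1 \<Rightarrow> 'b::ab_group_add \<Rightarrow> 'b) \<Rightarrow> nat \<Rightarrow> nat \<Rightarrow> (nat \<Rightarrow> nat \<Rightarrow> 'a) \<Rightarrow> (nat \<Rightarrow> 'b) \<Rightarrow> (nat \<Rightarrow> 'b)" where
  "mat_app s rows cols A u = (\<lambda>j. if j < rows then (\<Sum>l<cols. s (A j l) (u l)) else 0)"

definition is_free_res ::
  "('a::comm_ring_1 \<Rightarrow> 'm::ab_group_add \<Rightarrow> 'm) \<Rightarrow> (nat \<Rightarrow> nat) \<Rightarrow> (nat \<Rightarrow> nat \<Rightarrow> nat \<Rightarrow> 'a) \<Rightarrow> (nat \<Rightarrow> 'm) \<Rightarrow> bool" where
  "is_free_res s rk d e \<longleftrightarrow>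
     (\<forall>x. \<exists>v\<in>fvecs (rk 0). (\<Sum>l<rk 0. s (v l) (e l)) = x) \<and>
     (\<forall>v\<in>fvecs (rk 0). (\<Sum>l<rk 0. s (v l) (e l)) = 0 \<longleftrightarrow>
         (\<exists>w\<in>fvecs (rk 1). v = mat_app (*) (rk 0) (rk 1) (d 1) w)) \<and>
     (\<forall>i\<ge>1. \<forall>v\<in>fvecs (rk i). (\<forall>j. mat_app (*) (rk (i - 1)) (rk i) (d i) v j = 0) \<longleftrightarrow>
         (\<exists>w\<in>fvecs (rk (i + 1)). v = mat_app (*) (rk i) (rk (i + 1)) (d (i + 1)) w))"

(* Tor_t^R(M, A/B) = 0, where B \<subseteq> A are submodules of the module (X, sX), computed as the t-th
   homology of  F \<otimes>_R (A/B)  for a free resolution F of M; here  R^k \<otimes> (A/B) = (A/B)^k  and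
   d_i \<otimes> (A/B) acts by the same matrix.  Tor does not depend on the resolution; we require
   vanishing for every such resolution.  Tor_t(M,N) is the case A = N, B = {0};
   Tor_t(M,X/N) is the case A = UNIV, B = N. *)
definition tor_zero ::
  "('a::comm_ring_1 \<Rightarrow> 'm::ab_group_add \<Rightarrow> 'm) \<Rightarrow> ('a \<Rightarrow> 'x::ab_group_add \<Rightarrow> 'x) \<Rightarrow> nat \<Rightarrow> 'x set \<Rightarrow> 'x set \<Rightarrow> bool" where
  "tor_zero sM sX t A B \<longleftrightarrow>
     (\<forall>rk d e. is_free_res sM rk d e \<longrightarrow>
        (\<forall>u. (\<forall>j. u j \<in> A) \<and> u \<in> fvecs (rk t) \<and>
             (\<forall>j. mat_app sX (rk (t - 1)) (rk t) (d t) u j \<in> B) \<longrightarrow>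
             (\<exists>w. (\<forall>j. w j \<in> A) \<and> w \<in> fvecs (rk (t + 1)) \<and>
                  (\<forall>j. u j - mat_app sX (rk t) (rk (t + 1)) (d (t + 1)) w j \<in> B))))"

definition has_free_res_len :: "('a::comm_ring_1 \<Rightarrow> 'm::ab_group_add \<Rightarrow> 'm) \<Rightarrow> nat \<Rightarrow> bool" where
  "has_free_res_len s L \<longleftrightarrow> (\<exists>rk d e. is_free_res s rk d e \<and> (\<forall>i>L. rk i = 0))"

(* pd of the zero module is -\<infinity>; no finite resolution gives +\<infinity> *)
definition proj_dim :: "('a::comm_ring_1 \<Rightarrow> 'm::ab_group_add \<Rightarrow> 'm) \<Rightarrow> ereal" where
  "proj_dim s = (if (UNIV :: 'm set) = {0} then -\<infinity>
                 else Inf {ereal (real L) | L. has_free_res_len s L})"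

end

theory Submission
  imports Defs "HOL-Library.Function_Algebras"
begin

text \<open>Over the Noetherian local ring \<open>(R, m)\<close>, \<open>M\<close> has a minimal free resolution \<open>F\<close>:
  every differential has all its entries in \<open>m\<close>. Suppose \<open>F\<^sub>t \<noteq> 0\<close>. The Burch condition
  provides \<open>a \<in> m\<close> and \<open>z \<in> (N :\<^sub>X m)\<close> with \<open>a z \<notin> m N\<close>. Placing \<open>z\<close> in one coordinate of
  \<open>F\<^sub>t \<otimes> X\<close> gives a cycle of \<open>F \<otimes> X/N\<close>, since \<open>m z \<subseteq> N\<close>; by \<open>Tor\<^sub>t(M, X/N) = 0\<close> it equals
  \<open>\<partial> w\<close> modulo \<open>N\<close>. Then \<open>a \<partial> w\<close> is a cycle of \<open>F \<otimes> N\<close>, hence a boundary \<open>\<partial> y\<close> with \<open>y\<close> over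
  \<open>N\<close> by \<open>Tor\<^sub>t(M, N) = 0\<close>, and its coordinates lie in \<open>m N\<close> by minimality. Comparing first
  coordinates, \<open>a z \<in> m N\<close>, a contradiction. So \<open>F\<^sub>t = 0\<close>, and truncating \<open>F\<close> there gives a
  resolution of length \<open>t - 1\<close>.\<close>

lemma module_ring_mult: "module ((*) :: 'a::comm_ring_1 \<Rightarrow> 'a \<Rightarrow> 'a)"
  by unfold_locales (auto simp: algebra_simps)

lemma ring_ideal_mult: "ring_ideal I \<Longrightarrow> x \<in> I \<Longrightarrow> (c::'a::comm_ring_1) * x \<in> I"
  unfolding ring_ideal_def using module.subspace_scale[OF module_ring_mult] by blast

lemma ring_ideal_principal: "ring_ideal (range (\<lambda>c. c * (x::'a::comm_ring_1)))"
  unfolding ring_ideal_def module.span_singleton[OF module_ring_mult, symmetric]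
  by (rule module.subspace_span[OF module_ring_mult])

lemma ring_ideal_Union_chain:
  fixes C :: "'a::comm_ring_1 set set"
  assumes "C \<noteq> {}" "chain\<^sub>\<subseteq> C" "\<And>J. J \<in> C \<Longrightarrow> ring_ideal J"
  shows "ring_ideal (\<Union>C)"
proof -
  interpret R: module "(*) :: 'a \<Rightarrow> 'a \<Rightarrow> 'a" by (rule module_ring_mult)
  show ?thesis
    unfolding ring_ideal_def
  proof (rule R.subspaceI)
    show "0 \<in> \<Union>C" using assms(1,3) R.subspace_0 unfolding ring_ideal_def by blast
  next
    fix x y assume "x \<in> \<Union>C" "y \<in> \<Union>C"
    then obtain J where "J \<in> C" "x \<in> J" "y \<in> J"
      using assms(2) unfolding chain_subset_def by blast
    then show "x + y \<in> \<Union>C" using assms(3) R.subspace_add unfolding ring_ideal_def by blast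
  next
    fix c x assume "x \<in> \<Union>C"
    then show "c * x \<in> \<Union>C" using assms(3) ring_ideal_mult by blast
  qed
qed

lemma ring_ideal_in_maximal_ideal:
  fixes I :: "'a::comm_ring_1 set"
  assumes "ring_ideal I" "1 \<notin> I"
  shows "\<exists>M. maximal_ideal M \<and> I \<subseteq> M"
proof -
  define A where "A = {J. ring_ideal J \<and> I \<subseteq> J \<and> 1 \<notin> J}"
  have "\<forall>C\<in>chains A. \<exists>U\<in>A. \<forall>J\<in>C. J \<subseteq> U"
  proof
    fix C assume C: "C \<in> chains A"
    show "\<exists>U\<in>A. \<forall>J\<in>C. J \<subseteq> U"
    proof (cases "C = {}")
      case True
      then show ?thesis using assms unfolding A_def by blast
    next
      case False
      have CA: "C \<subseteq> A" and ch: "chain\<^sub>\<subseteq> C" using C unfolding chains_def by auto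
      have "ring_ideal (\<Union>C)"
        using CA unfolding A_def by (intro ring_ideal_Union_chain[OF False ch]) auto
      moreover have "I \<subseteq> \<Union>C" "1 \<notin> \<Union>C" using CA False unfolding A_def by auto
      ultimately have "\<Union>C \<in> A" unfolding A_def by blast
      then show ?thesis by blast
    qed
  qed
  from Zorn_Lemma2[OF this] obtain M
    where M: "M \<in> A" and max: "\<forall>J\<in>A. M \<subseteq> J \<longrightarrow> J = M"
    by blast
  have "maximal_ideal M"
    unfolding maximal_ideal_def
  proof (intro conjI allI impI)
    show "ring_ideal M" "M \<noteq> UNIV" using M unfolding A_def by auto
    fix J assume J: "ring_ideal J \<and> M \<subseteq> J"
    show "J = M \<or> J = UNIV"
    proof (cases "1 \<in> J")
      case True
      then have "J = UNIV" using J ring_ideal_mult[of J 1] by auto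
      then show ?thesis ..
    next
      case False
      then show ?thesis using J M max unfolding A_def by auto
    qed
  qed
  then show ?thesis using M unfolding A_def by blast
qed

lemma local_ring_unit_if_notin_maximal:
  fixes m :: "'a::comm_ring_1 set"
  assumes "local_ring TYPE('a)" "maximal_ideal m" "x \<notin> m"
  shows "\<exists>y. y * x = 1"
proof (rule ccontr)
  assume "\<nexists>y. y * x = 1"
  then have "1 \<notin> range (\<lambda>c. c * x)" by (metis rangeE)
  then obtain M where M: "maximal_ideal M" "range (\<lambda>c. c * x) \<subseteq> M"
    using ring_ideal_in_maximal_ideal[OF ring_ideal_principal] by blast
  then have "M = m" using assms(1,2) unfolding local_ring_def by blast
  then show False using M(2) assms(3) by (metis mult_1 rangeI subsetD)
qed

text \<open>In a local ring this is, by Nakayama's lemma, minimality of the generating family \<open>g\<close>,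
  in the only form used below.\<close>
definition syzygies_in ::
  "'a::comm_ring_1 set \<Rightarrow> ('a \<Rightarrow> 'b::ab_group_add \<Rightarrow> 'b) \<Rightarrow> nat \<Rightarrow> (nat \<Rightarrow> 'b) \<Rightarrow> bool"
  where "syzygies_in m s k g \<longleftrightarrow> (\<forall>v. (\<Sum>l<k. s (v l) (g l)) = 0 \<longrightarrow> (\<forall>l<k. v l \<in> m))"

context module
begin

lemma span_image_lessThan_iff:
  "x \<in> span (g ` {..<k}) \<longleftrightarrow> (\<exists>v\<in>fvecs k. x = (\<Sum>l<k. v l *s g l))"
proof (induction k arbitrary: x)
  case 0
  have "(\<lambda>_. 0) \<in> fvecs 0" by (simp add: fvecs_def)
  then show ?case by auto
next
  case (Suc k)
  have img: "g ` {..<Suc k} = insert (g k) (g ` {..<k})" by (simp add: lessThan_Suc)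
  show ?case
  proof
    assume "x \<in> span (g ` {..<Suc k})"
    then obtain c where "x - c *s g k \<in> span (g ` {..<k})" unfolding img span_insert by auto
    then obtain v where v: "v \<in> fvecs k" "x - c *s g k = (\<Sum>l<k. v l *s g l)" using Suc.IH by blast
    have "v(k := c) \<in> fvecs (Suc k)" using v(1) unfolding fvecs_def by auto
    moreover have "x = (\<Sum>l<Suc k. (v(k := c)) l *s g l)"
      using v(2) by (simp add: sum.lessThan_Suc diff_eq_eq)
    ultimately show "\<exists>v\<in>fvecs (Suc k). x = (\<Sum>l<Suc k. v l *s g l)" by blast
  next
    assume "\<exists>v\<in>fvecs (Suc k). x = (\<Sum>l<Suc k. v l *s g l)"
    then obtain v where v: "v \<in> fvecs (Suc k)" "x = (\<Sum>l<Suc k. v l *s g l)" by blast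
    have "v(k := 0) \<in> fvecs k" using v(1) unfolding fvecs_def by auto
    moreover have "x - v k *s g k = (\<Sum>l<k. (v(k := 0)) l *s g l)"
      unfolding v(2) by (simp add: sum.lessThan_Suc)
    ultimately have "x - v k *s g k \<in> span (g ` {..<k})" using Suc.IH by blast
    then show "x \<in> span (g ` {..<Suc k})" unfolding img span_insert by auto
  qed
qed

text \<open>A generating family of least cardinality: if some syzygy had a unit coefficient,
  the corresponding generator would be redundant.\<close>
lemma exists_generators_syzygies_in_maximal:
  fixes m :: "'a set"
  assumes loc: "local_ring TYPE('a)" and mm: "maximal_ideal m" and S: "finite S"
  shows "\<exists>k g. span (g ` {..<k}) = span S \<and> syzygies_in m scale k g"
proof -
  define P where "P n \<longleftrightarrow> (\<exists>G. finite G \<and> card G = n \<and> span G = span S)" for n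
  define n where "n = (LEAST n. P n)"
  have "P n" unfolding n_def by (rule LeastI[of P "card S"]) (use S in \<open>auto simp: P_def\<close>)
  then obtain G where G: "finite G" "card G = n" "span G = span S" unfolding P_def by blast
  obtain g where g: "bij_betw g {..<n} G"
    using ex_bij_betw_nat_finite[OF G(1)] G(2) by (auto simp: atLeast0LessThan)
  have "syzygies_in m scale n g"
    unfolding syzygies_in_def
  proof (rule allI, rule impI, rule ccontr)
    fix v assume rel: "(\<Sum>l<n. v l *s g l) = 0" and "\<not> (\<forall>l<n. v l \<in> m)"
    then obtain p where p: "p < n" "v p \<notin> m" by blast
    obtain c where c: "c * v p = 1" using local_ring_unit_if_notin_maximal[OF loc mm p(2)] by blast
    have "0 = c *s (\<Sum>l<n. v l *s g l)" using rel by simp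
    also have "\<dots> = (\<Sum>l<n. (c * v l) *s g l)" by (simp add: scale_sum_right)
    also have "\<dots> = (c * v p) *s g p + (\<Sum>l\<in>{..<n} - {p}. (c * v l) *s g l)"
      using p(1) by (intro sum.remove) auto
    finally have gp: "g p = - (\<Sum>l\<in>{..<n} - {p}. (c * v l) *s g l)"
      unfolding c by (simp add: eq_neg_iff_add_eq_0)
    have "g l \<in> G - {g p}" if "l \<in> {..<n} - {p}" for l
      using that p(1) g by (auto simp: bij_betw_def inj_on_eq_iff)
    then have "g p \<in> span (G - {g p})"
      unfolding gp by (intro span_neg span_sum span_scale span_base) auto
    moreover have "g p \<in> G" using g p(1) by (auto dest: bij_betwE)
    ultimately have "G \<subseteq> span (G - {g p})" using span_superset[of "G - {g p}"] by blast
    then have "span (G - {g p}) = span S"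
      unfolding G(3)[symmetric] span_eq using span_superset[of G] by blast
    then have "P (card (G - {g p}))" unfolding P_def using G(1) by blast
    moreover have "card (G - {g p}) < n"
      using card_Diff1_less[OF G(1) \<open>g p \<in> G\<close>] G(2) by simp
    ultimately show False using not_less_Least unfolding n_def by blast
  qed
  moreover have "g ` {..<n} = G" using g by (simp add: bij_betw_def)
  ultimately show ?thesis using G(3) by blast
qed

end

lemma sum_fun_apply: "(\<Sum>a\<in>A. f a) j = (\<Sum>a\<in>A. f a j)"
  by (induction A rule: infinite_finite_induct) auto

definition vec_scale :: "'a::comm_ring_1 \<Rightarrow> (nat \<Rightarrow> 'a) \<Rightarrow> nat \<Rightarrow> 'a"
  where "vec_scale r v = (\<lambda>j. r * v j)"

lemma vec_scale_apply: "vec_scale r v j = r * v j"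
  by (simp add: vec_scale_def)

lemma module_vec_scale: "module (vec_scale :: 'a::comm_ring_1 \<Rightarrow> _)"
  by unfold_locales (simp_all add: vec_scale_def fun_eq_iff algebra_simps)

lemma subspace_fvecs: "module.subspace vec_scale (fvecs n :: (nat \<Rightarrow> 'a::comm_ring_1) set)"
  by (rule module.subspaceI[OF module_vec_scale]) (auto simp: fvecs_def vec_scale_apply)

lemma ring_ideal_coordinate_image:
  fixes K :: "(nat \<Rightarrow> 'a::comm_ring_1) set"
  assumes "module.subspace vec_scale K"
  shows "ring_ideal ((\<lambda>v. v n) ` K)"
proof -
  interpret V: module "vec_scale :: 'a \<Rightarrow> _" by (rule module_vec_scale)
  interpret R: module "(*) :: 'a \<Rightarrow> 'a \<Rightarrow> 'a" by (rule module_ring_mult)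
  show ?thesis
    unfolding ring_ideal_def
  proof (rule R.subspaceI)
    show "0 \<in> (\<lambda>v. v n) ` K" using V.subspace_0[OF assms] by (intro image_eqI[of _ _ 0]) simp_all
  next
    fix x y assume "x \<in> (\<lambda>v. v n) ` K" "y \<in> (\<lambda>v. v n) ` K"
    then obtain u w where "u \<in> K" "w \<in> K" "x = u n" "y = w n" by blast
    then show "x + y \<in> (\<lambda>v. v n) ` K"
      using V.subspace_add[OF assms] by (intro image_eqI[of _ _ "u + w"]) simp_all
  next
    fix c x assume "x \<in> (\<lambda>v. v n) ` K"
    then obtain u where "u \<in> K" "x = u n" by blast
    then show "c * x \<in> (\<lambda>v. v n) ` K"
      using V.subspace_scale[OF assms]
    by (intro image_eqI[of _ _ "vec_scale c u"]) (simp_all add: vec_scale_apply)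
  qed
qed

text \<open>Induction on the number of coordinates: the last coordinates of \<open>K\<close> form an ideal;
  lifting its finitely many generators to \<open>K\<close> reduces every element of \<open>K\<close> to one with
  a vanishing last coordinate.\<close>
lemma noetherian_subspace_fvecs_finite_span:
  fixes K :: "(nat \<Rightarrow> 'a::comm_ring_1) set"
  assumes noeth: "noetherian_ring TYPE('a)"
    and "module.subspace vec_scale K" "K \<subseteq> fvecs n"
  shows "\<exists>S. finite S \<and> S \<subseteq> K \<and> module.span vec_scale S = K"
  using assms(2,3)
proof (induction n arbitrary: K)
  case 0
  interpret V: module "vec_scale :: 'a \<Rightarrow> _" by (rule module_vec_scale)
  have "K = {0}" using 0 V.subspace_0[OF 0(1)] by (auto simp: fvecs_def fun_eq_iff)
  then show ?case by (intro exI[of _ "{}"]) simp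
next
  case (Suc n)
  interpret V: module "vec_scale :: 'a \<Rightarrow> _" by (rule module_vec_scale)
  interpret R: module "(*) :: 'a \<Rightarrow> 'a \<Rightarrow> 'a" by (rule module_ring_mult)
  have "ring_ideal ((\<lambda>v. v n) ` K)" by (rule ring_ideal_coordinate_image[OF Suc.prems(1)])
  from noeth[unfolded noetherian_ring_def, rule_format, OF this] obtain T
    where T: "finite T" "T \<subseteq> (\<lambda>v. v n) ` K" "(\<lambda>v. v n) ` K = R.span T"
    by blast
  have "\<forall>a\<in>T. \<exists>v. v \<in> K \<and> v n = a" using T(2) by blast
  from bchoice[OF this] obtain lift where lift: "\<forall>a\<in>T. lift a \<in> K \<and> lift a n = a"
    by blast
  have "V.subspace (K \<inter> fvecs n)" using V.subspace_inter[OF Suc.prems(1) subspace_fvecs] .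
  from Suc.IH[OF this Int_lower2] obtain S'
    where S': "finite S'" "S' \<subseteq> K \<inter> fvecs n" "V.span S' = K \<inter> fvecs n"
    by blast
  define S where "S = S' \<union> lift ` T"
  have SK: "S \<subseteq> K" unfolding S_def using S'(2) lift by auto
  have "K \<subseteq> V.span S"
  proof
    fix x assume x: "x \<in> K"
    then obtain c where c: "x n = (\<Sum>a\<in>T. c a * a)"
      using T(3) R.span_finite[OF T(1)] by auto
    define y where "y = (\<Sum>a\<in>T. vec_scale (c a) (lift a))"
    have yK: "y \<in> K" unfolding y_def
      using lift by (intro V.subspace_sum[OF Suc.prems(1)] V.subspace_scale[OF Suc.prems(1)]) auto
    have yS: "y \<in> V.span S" unfolding y_def S_def
      by (intro V.span_sum V.span_scale V.span_base) auto
    have "(x - y) j = 0" if "j \<ge> n" for j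
    proof (cases "j = n")
      case True
      have "(\<Sum>a\<in>T. c a * lift a n) = (\<Sum>a\<in>T. c a * a)" using lift by (intro sum.cong) auto
      then show ?thesis unfolding y_def True by (simp add: sum_fun_apply vec_scale_apply c)
    next
      case False
      then have "x j = 0" "\<And>a. a \<in> T \<Longrightarrow> lift a j = 0"
        using that x lift Suc.prems(2) unfolding fvecs_def by auto
      then show ?thesis unfolding y_def by (simp add: sum_fun_apply vec_scale_apply)
    qed
    then have "x - y \<in> fvecs n" unfolding fvecs_def by blast
    then have "x - y \<in> V.span S'" using S'(3) V.subspace_diff[OF Suc.prems(1) x yK] by blast
    then have "x - y \<in> V.span S" using V.span_mono[of S' S] unfolding S_def by blast
    then have "(x - y) + y \<in> V.span S" using yS by (rule V.span_add)
    then show "x \<in> V.span S" by simp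
  qed
  show ?case
  proof (intro exI conjI)
    show "finite S" unfolding S_def using S'(1) T(1) by blast
    show "V.span S = K" using \<open>K \<subseteq> V.span S\<close> V.span_minimal[OF SK Suc.prems(1)] by blast
  qed (rule SK)
qed

definition syzygies ::
  "('a::comm_ring_1 \<Rightarrow> 'b::ab_group_add \<Rightarrow> 'b) \<Rightarrow> nat \<Rightarrow> (nat \<Rightarrow> 'b) \<Rightarrow> (nat \<Rightarrow> 'a) set"
  where "syzygies s k g = {v \<in> fvecs k. (\<Sum>l<k. s (v l) (g l)) = 0}"

lemma subspace_syzygies:
  assumes "module s"
  shows "module.subspace vec_scale (syzygies s k g)"
proof -
  interpret M: module s by (rule assms)
  interpret V: module "vec_scale :: 'a \<Rightarrow> _" by (rule module_vec_scale)
  show ?thesis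
  proof (rule V.subspaceI)
    show "0 \<in> syzygies s k g" unfolding syzygies_def fvecs_def by simp
  next
    fix x y assume "x \<in> syzygies s k g" "y \<in> syzygies s k g"
    then show "x + y \<in> syzygies s k g"
      unfolding syzygies_def fvecs_def by (simp add: M.scale_left_distrib sum.distrib)
  next
    fix c x assume x: "x \<in> syzygies s k g"
    have "(\<Sum>l<k. s (vec_scale c x l) (g l)) = s c (\<Sum>l<k. s (x l) (g l))"
      by (simp add: vec_scale_apply M.scale_sum_right)
    then show "vec_scale c x \<in> syzygies s k g"
      using x unfolding syzygies_def fvecs_def by (simp add: vec_scale_apply)
  qed
qed

definition minimal_syzygy_generators ::
  "'a::comm_ring_1 set \<Rightarrow> ('a \<Rightarrow> 'b::ab_group_add \<Rightarrow> 'b) \<Rightarrow> nat \<Rightarrow> (nat \<Rightarrow> 'b) \<Rightarrow>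
    nat \<Rightarrow> (nat \<Rightarrow> nat \<Rightarrow> 'a) \<Rightarrow> bool"
  where "minimal_syzygy_generators m s k g k' h \<longleftrightarrow>
    module.span vec_scale (h ` {..<k'}) = syzygies s k g \<and> syzygies_in m vec_scale k' h"

lemma exists_minimal_syzygy_generators:
  fixes m :: "'a::comm_ring_1 set"
  assumes "noetherian_ring TYPE('a)" "local_ring TYPE('a)" "maximal_ideal m" "module s"
  shows "\<exists>k' h. minimal_syzygy_generators m s k g k' h"
proof -
  have "syzygies s k g \<subseteq> fvecs k" unfolding syzygies_def by blast
  from noetherian_subspace_fvecs_finite_span[OF assms(1) subspace_syzygies[OF assms(4)] this]
  obtain S where S: "finite S" "module.span vec_scale S = syzygies s k g"
    by blast
  obtain k' h where "module.span vec_scale (h ` {..<k'}) = module.span vec_scale S"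
    and "syzygies_in m vec_scale k' h"
    using module.exists_generators_syzygies_in_maximal[OF module_vec_scale assms(2,3) S(1)] by blast
  then show ?thesis unfolding minimal_syzygy_generators_def S(2) by blast
qed

lemma minimal_syzygy_generators_syzygies:
  assumes "minimal_syzygy_generators m s k g k' h" "l < k'"
  shows "h l \<in> syzygies s k g"
proof -
  have "h l \<in> module.span vec_scale (h ` {..<k'})"
    using assms(2) by (intro module.span_base[OF module_vec_scale]) simp
  then show ?thesis using assms(1) unfolding minimal_syzygy_generators_def by simp
qed

lemma mat_app_columns:
  assumes "\<And>l. l < q \<Longrightarrow> h l \<in> fvecs p"
  shows "mat_app (*) p q (\<lambda>j l. h l j) w = (\<Sum>l<q. vec_scale (w l) (h l))"
proof
  fix j
  show "mat_app (*) p q (\<lambda>j l. h l j) w j = (\<Sum>l<q. vec_scale (w l) (h l)) j"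
  proof (cases "j < p")
    case True
    then show ?thesis unfolding mat_app_def sum_fun_apply by (simp add: vec_scale_apply mult.commute)
  next
    case False
    then have "\<And>l. l < q \<Longrightarrow> h l j = 0" using assms unfolding fvecs_def by auto
    then show ?thesis using False unfolding mat_app_def sum_fun_apply by (simp add: vec_scale_apply)
  qed
qed

lemma minimal_syzygy_generators_exact:
  assumes gen: "minimal_syzygy_generators m s k g k' h" and v: "v \<in> fvecs k"
  shows "(\<Sum>l<k. s (v l) (g l)) = 0 \<longleftrightarrow>
    (\<exists>w\<in>fvecs k'. v = mat_app (*) k k' (\<lambda>j l. h l j) w)"
proof -
  interpret V: module "vec_scale :: 'a \<Rightarrow> _" by (rule module_vec_scale)
  have cols: "\<And>l. l < k' \<Longrightarrow> h l \<in> fvecs k"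
    using minimal_syzygy_generators_syzygies[OF gen] unfolding syzygies_def by blast
  have "(\<Sum>l<k. s (v l) (g l)) = 0 \<longleftrightarrow> v \<in> V.span (h ` {..<k'})"
    using gen v unfolding minimal_syzygy_generators_def syzygies_def by simp
  also have "\<dots> \<longleftrightarrow> (\<exists>w\<in>fvecs k'. v = (\<Sum>l<k'. vec_scale (w l) (h l)))"
    by (rule V.span_image_lessThan_iff)
  also have "\<dots> \<longleftrightarrow> (\<exists>w\<in>fvecs k'. v = mat_app (*) k k' (\<lambda>j l. h l j) w)"
    using mat_app_columns[OF cols] by simp
  finally show ?thesis .
qed

lemma minimal_syzygy_generators_entries:
  assumes "minimal_syzygy_generators m s k g k' h" "syzygies_in m s k g" "l < k'" "j < k"
  shows "h l j \<in> m"
proof -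
  have "(\<Sum>j<k. s (h l j) (g j)) = 0"
    using minimal_syzygy_generators_syzygies[OF assms(1,3)] unfolding syzygies_def by blast
  then show ?thesis using assms(2,4) unfolding syzygies_in_def by blast
qed

text \<open>\<open>col i l\<close> is the \<open>l\<close>-th column of the \<open>i\<close>-th differential; the columns of each
  differential minimally generate the syzygies of the columns of the previous one (of the
  generators \<open>e\<close> of \<open>M\<close> for the first).\<close>
lemma is_free_res_of_minimal_syzygy_generators:
  fixes sM :: "'a::comm_ring_1 \<Rightarrow> 'm::ab_group_add \<Rightarrow> 'm"
    and col :: "nat \<Rightarrow> nat \<Rightarrow> nat \<Rightarrow> 'a"
  assumes ms: "module sM" and span: "module.span sM (e ` {..<rk 0}) = UNIV"
    and gen0: "minimal_syzygy_generators m sM (rk 0) e (rk 1) (col 1)"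
    and gen: "\<And>i. i \<ge> 1 \<Longrightarrow>
      minimal_syzygy_generators m vec_scale (rk i) (col i) (rk (Suc i)) (col (Suc i))"
  shows "is_free_res sM rk (\<lambda>i j l. col i l j) e"
proof -
  have cols: "col i l \<in> fvecs (rk (i - 1))" if "i \<ge> 1" "l < rk i" for i l
  proof (cases "i = 1")
    case True
    then show ?thesis
      using minimal_syzygy_generators_syzygies[OF gen0] that(2) unfolding syzygies_def by auto
  next
    case False
    then have "minimal_syzygy_generators m vec_scale (rk (i - 1)) (col (i - 1)) (rk i) (col i)"
      using gen[of "i - 1"] that(1) by simp
    then show ?thesis
      using minimal_syzygy_generators_syzygies that(2) unfolding syzygies_def by blast
  qed
  have onto: "\<forall>x. \<exists>v\<in>fvecs (rk 0). (\<Sum>l<rk 0. sM (v l) (e l)) = x"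
    using span module.span_image_lessThan_iff[OF ms, of _ e "rk 0"] by (metis UNIV_I)
  have exact0: "\<forall>v\<in>fvecs (rk 0). (\<Sum>l<rk 0. sM (v l) (e l)) = 0 \<longleftrightarrow>
      (\<exists>w\<in>fvecs (rk 1). v = mat_app (*) (rk 0) (rk 1) (\<lambda>j l. col 1 l j) w)"
    using minimal_syzygy_generators_exact[OF gen0] by blast
  have exact: "(\<forall>j. mat_app (*) (rk (i - 1)) (rk i) (\<lambda>j l. col i l j) v j = 0) \<longleftrightarrow>
      (\<exists>w\<in>fvecs (rk (i + 1)). v = mat_app (*) (rk i) (rk (i + 1)) (\<lambda>j l. col (i + 1) l j) w)"
    if i: "i \<ge> 1" and v: "v \<in> fvecs (rk i)" for i v
  proof -
    have "(\<forall>j. mat_app (*) (rk (i - 1)) (rk i) (\<lambda>j l. col i l j) v j = 0) \<longleftrightarrow>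
        (\<Sum>l<rk i. vec_scale (v l) (col i l)) = 0"
      using mat_app_columns[of "rk i" "col i" "rk (i - 1)" v] cols[OF i] by (simp add: fun_eq_iff)
    also have "\<dots> \<longleftrightarrow>
        (\<exists>w\<in>fvecs (rk (i + 1)). v = mat_app (*) (rk i) (rk (i + 1)) (\<lambda>j l. col (i + 1) l j) w)"
      using minimal_syzygy_generators_exact[OF gen[OF i] v] by simp
    finally show ?thesis .
  qed
  show ?thesis unfolding is_free_res_def using onto exact0 exact by blast
qed

lemma minimal_syzygy_generators_chain_entries:
  fixes sM :: "'a::comm_ring_1 \<Rightarrow> 'm::ab_group_add \<Rightarrow> 'm"
    and col :: "nat \<Rightarrow> nat \<Rightarrow> nat \<Rightarrow> 'a"
  assumes e: "syzygies_in m sM (rk 0) e"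
    and gen0: "minimal_syzygy_generators m sM (rk 0) e (rk 1) (col 1)"
    and gen: "\<And>i. i \<ge> 1 \<Longrightarrow>
      minimal_syzygy_generators m vec_scale (rk i) (col i) (rk (Suc i)) (col (Suc i))"
    and i: "i \<ge> 1" and j: "j < rk (i - 1)" and l: "l < rk i"
  shows "col i l j \<in> m"
proof (cases "i = 1")
  case True
  then show ?thesis using minimal_syzygy_generators_entries[OF gen0 e] j l by simp
next
  case False
  have "syzygies_in m vec_scale (rk (i - 1)) (col (i - 1))"
  proof (cases "i = 2")
    case True
    then show ?thesis using gen0 unfolding minimal_syzygy_generators_def by simp
  next
    case False
    then show ?thesis
      using gen[of "i - 2"] \<open>i \<noteq> 1\<close> i unfolding minimal_syzygy_generators_def
      by (simp add: Suc_diff_Suc numeral_2_eq_2)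
  qed
  moreover have "minimal_syzygy_generators m vec_scale (rk (i - 1)) (col (i - 1)) (rk i) (col i)"
    using gen[of "i - 1"] False i by simp
  ultimately show ?thesis using minimal_syzygy_generators_entries j l by blast
qed

lemma exists_minimal_free_res:
  fixes m :: "'a::comm_ring_1 set" and sM :: "'a \<Rightarrow> 'm::ab_group_add \<Rightarrow> 'm"
  assumes noeth: "noetherian_ring TYPE('a)" and loc: "local_ring TYPE('a)"
    and mm: "maximal_ideal m" and fg: "fin_gen_module sM"
  shows "\<exists>rk d e. is_free_res sM rk d e \<and>
    (\<forall>i\<ge>1. \<forall>j<rk (i - 1). \<forall>l<rk i. d i j l \<in> m)"
proof -
  have ms: "module sM" using fg unfolding fin_gen_module_def by blast
  obtain S where S: "finite S" "module.span sM S = UNIV" using fg unfolding fin_gen_module_def by blast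
  obtain k0 e where e: "module.span sM (e ` {..<k0}) = UNIV" "syzygies_in m sM k0 e"
    using module.exists_generators_syzygies_in_maximal[OF ms loc mm S(1)] S(2) by blast
  obtain k1 h1 where gen0: "minimal_syzygy_generators m sM k0 e k1 h1"
    using exists_minimal_syzygy_generators[OF noeth loc mm ms] by blast
  have "\<forall>p. \<exists>p'. minimal_syzygy_generators m vec_scale (fst p) (snd p) (fst p') (snd p')"
    using exists_minimal_syzygy_generators[OF noeth loc mm module_vec_scale] by fastforce
  then obtain step where step:
    "\<And>p. minimal_syzygy_generators m vec_scale (fst p) (snd p) (fst (step p)) (snd (step p))"
    by metis
  define P where "P i = (step ^^ i) (k1, h1)" for i
  define rk where "rk i = (if i = 0 then k0 else fst (P (i - 1)))" for i
  define col where "col i = snd (P (i - 1))" for i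
  have gen0': "minimal_syzygy_generators m sM (rk 0) e (rk 1) (col 1)"
    using gen0 by (simp add: rk_def col_def P_def)
  have gen: "minimal_syzygy_generators m vec_scale (rk i) (col i) (rk (Suc i)) (col (Suc i))"
    if i: "i \<ge> 1" for i
  proof -
    obtain i' where i': "i = Suc i'" using i by (cases i) auto
    show ?thesis using step[of "P i'"] unfolding i' by (simp add: rk_def col_def P_def)
  qed
  have rk0: "rk 0 = k0" unfolding rk_def by simp
  have "is_free_res sM rk (\<lambda>i j l. col i l j) e"
    using is_free_res_of_minimal_syzygy_generators[OF ms _ gen0' gen] e(1) unfolding rk0 by blast
  moreover have "\<forall>i\<ge>1. \<forall>j<rk (i - 1). \<forall>l<rk i. col i l j \<in> m"
    using minimal_syzygy_generators_chain_entries[OF _ gen0' gen] e(2) unfolding rk0 by blast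
  ultimately show ?thesis by blast
qed

lemma burch_submodule_witness:
  assumes ms: "module s" and burch: "burch_submodule s m N"
  shows "\<exists>a z. a \<in> m \<and> z \<in> colon_sub s N m \<and> s a z \<notin> ideal_times s m N"
proof (rule ccontr)
  interpret X: module s by (rule ms)
  assume "\<nexists>a z. a \<in> m \<and> z \<in> colon_sub s N m \<and> s a z \<notin> ideal_times s m N"
  then have "{s r x | r x. r \<in> m \<and> x \<in> colon_sub s N m} \<subseteq> ideal_times s m N" by blast
  then have "ideal_times s m (colon_sub s N m) \<subseteq> ideal_times s m N"
    unfolding ideal_times_def[of s m "colon_sub s N m"]
    by (rule X.span_minimal) (simp add: ideal_times_def)
  moreover have "N \<subseteq> colon_sub s N m"
    using X.subspace_scale burch unfolding burch_submodule_def colon_sub_def by blast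
  then have "ideal_times s m N \<subseteq> ideal_times s m (colon_sub s N m)"
    unfolding ideal_times_def by (intro X.span_mono) blast
  ultimately show False using burch unfolding burch_submodule_def by blast
qed

lemma is_free_res_mat_mult_eq_0:
  assumes res: "is_free_res sM rk d e" and t: "t \<ge> 1"
    and j: "j < rk (t - 1)" and l: "l < rk (t + 1)"
  shows "(\<Sum>k<rk t. d t j k * d (t + 1) k l) = 0"
proof -
  define \<delta> :: "nat \<Rightarrow> 'a" where "\<delta> k = (if k = l then 1 else 0)" for k
  have \<delta>: "\<delta> \<in> fvecs (rk (t + 1))" using l unfolding \<delta>_def fvecs_def by auto
  define v where "v = mat_app (*) (rk t) (rk (t + 1)) (d (t + 1)) \<delta>"
  have vk: "v k = (if k < rk t then d (t + 1) k l else 0)" for k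
    using l unfolding v_def mat_app_def \<delta>_def by (simp add: if_distrib[of "(*) _"] sum.delta cong: if_cong)
  have "v \<in> fvecs (rk t)" unfolding fvecs_def using vk by simp
  then have "\<forall>j. mat_app (*) (rk (t - 1)) (rk t) (d t) v j = 0"
    using res t \<delta> unfolding is_free_res_def v_def by blast
  then have "(\<Sum>k<rk t. d t j k * v k) = 0" using j unfolding mat_app_def by metis
  then show ?thesis using vk by simp
qed

lemma is_free_res_mat_app_mat_app:
  assumes ms: "module s" and res: "is_free_res sM rk d e" and t: "t \<ge> 1"
  shows "mat_app s (rk (t - 1)) (rk t) (d t) (mat_app s (rk t) (rk (t + 1)) (d (t + 1)) w) j = 0"
proof (cases "j < rk (t - 1)")
  case False
  then show ?thesis unfolding mat_app_def by simp
next
  case True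
  interpret X: module s by (rule ms)
  have "mat_app s (rk (t - 1)) (rk t) (d t) (mat_app s (rk t) (rk (t + 1)) (d (t + 1)) w) j
      = (\<Sum>k<rk t. s (d t j k) (\<Sum>l<rk (t + 1). s (d (t + 1) k l) (w l)))"
    using True unfolding mat_app_def by simp
  also have "\<dots> = (\<Sum>l<rk (t + 1). s (\<Sum>k<rk t. d t j k * d (t + 1) k l) (w l))"
    by (simp add: X.scale_sum_right X.scale_sum_left sum.swap[of _ "{..<rk t}"])
  also have "\<dots> = 0"
    using is_free_res_mat_mult_eq_0[OF res t True] by simp
  finally show ?thesis .
qed

lemma mat_app_scale:
  assumes "module s"
  shows "mat_app s p q A (\<lambda>k. s a (x k)) j = s a (mat_app s p q A x j)"
  unfolding mat_app_def
  by (simp add: module.scale_sum_right[OF assms] module.scale_scale[OF assms]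
      module.scale_zero_right[OF assms] mult.commute)

lemma is_free_res_rank_eq_0_if_burch:
  fixes sX :: "'a::comm_ring_1 \<Rightarrow> 'x::ab_group_add \<Rightarrow> 'x"
  assumes ms: "module sX" and res: "is_free_res sM rk d e" and t: "t \<ge> 1"
    and min_t: "\<And>j l. j < rk (t - 1) \<Longrightarrow> l < rk t \<Longrightarrow> d t j l \<in> m"
    and min_t1: "\<And>j l. j < rk t \<Longrightarrow> l < rk (t + 1) \<Longrightarrow> d (t + 1) j l \<in> m"
    and burch: "burch_submodule sX m N"
    and tor_N: "tor_zero sM sX t N {0}" and tor_XN: "tor_zero sM sX t UNIV N"
  shows "rk t = 0"
proof (rule ccontr)
  interpret X: module sX by (rule ms)
  assume "rk t \<noteq> 0"
  have N: "X.subspace N" using burch unfolding burch_submodule_def by blast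
  obtain a z where a: "a \<in> m" and z: "z \<in> colon_sub sX N m" and az: "sX a z \<notin> ideal_times sX m N"
    using burch_submodule_witness[OF ms burch] by blast
  define u where "u j = (if j = 0 then z else 0)" for j :: nat
  have u: "u \<in> fvecs (rk t)" using \<open>rk t \<noteq> 0\<close> unfolding u_def fvecs_def by auto
  have "mat_app sX (rk (t - 1)) (rk t) (d t) u j \<in> N" for j
  proof (cases "j < rk (t - 1)")
    case True
    have "mat_app sX (rk (t - 1)) (rk t) (d t) u j = sX (d t j 0) z"
      using True \<open>rk t \<noteq> 0\<close> unfolding mat_app_def u_def
      by (simp add: if_distrib[of "sX _"] sum.delta cong: if_cong)
    then show ?thesis using z min_t[OF True] \<open>rk t \<noteq> 0\<close> unfolding colon_sub_def by simp
  next
    case False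
    then show ?thesis using X.subspace_0[OF N] unfolding mat_app_def by simp
  qed
  then obtain w where wN: "\<forall>j. u j - mat_app sX (rk t) (rk (t + 1)) (d (t + 1)) w j \<in> N"
    using tor_XN res u unfolding tor_zero_def by blast
  define b where "b = mat_app sX (rk t) (rk (t + 1)) (d (t + 1)) w"
  define v where "v j = sX a (b j)" for j :: nat
  have au: "sX a (u j) \<in> N" for j
    using z a X.subspace_0[OF N] unfolding u_def colon_sub_def by auto
  have vN: "v j \<in> N" for j
  proof -
    have "v j = sX a (u j) - sX a (u j - b j)" unfolding v_def by (simp add: X.scale_right_diff_distrib)
    then show ?thesis
      using X.subspace_diff[OF N au X.subspace_scale[OF N]] wN unfolding b_def by simp
  qed
  have "v \<in> fvecs (rk t)" unfolding v_def b_def fvecs_def mat_app_def by simp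
  moreover have "mat_app sX (rk (t - 1)) (rk t) (d t) v j \<in> {0}" for j
    unfolding v_def mat_app_scale[OF ms] b_def is_free_res_mat_app_mat_app[OF ms res t] by simp
  ultimately obtain y where yN: "\<forall>j. y j \<in> N"
    and yv: "\<forall>j. v j - mat_app sX (rk t) (rk (t + 1)) (d (t + 1)) y j \<in> {0}"
    using tor_N res vN unfolding tor_zero_def by blast
  have "v 0 = (\<Sum>l<rk (t + 1). sX (d (t + 1) 0 l) (y l))"
    using yv \<open>rk t \<noteq> 0\<close> unfolding mat_app_def by simp
  also have "\<dots> \<in> ideal_times sX m N"
    unfolding ideal_times_def using min_t1 \<open>rk t \<noteq> 0\<close> yN
    by (intro X.span_sum X.span_base) blast
  finally have "v 0 \<in> ideal_times sX m N" .
  moreover have "sX a (u 0 - b 0) \<in> ideal_times sX m N"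
    unfolding ideal_times_def using a wN unfolding b_def by (intro X.span_base) blast
  ultimately have "v 0 + sX a (u 0 - b 0) \<in> ideal_times sX m N"
    unfolding ideal_times_def by (rule X.span_add)
  then show False using az unfolding v_def u_def by (simp add: X.scale_right_diff_distrib)
qed

lemma is_free_res_truncate:
  assumes res: "is_free_res s rk d e" and t: "t \<ge> 1" and rk: "rk t = 0"
  shows "is_free_res s (\<lambda>i. if i < t then rk i else 0) d e"
proof -
  define rk' where "rk' i = (if i < t then rk i else 0)" for i
  have same: "rk' i = rk i" if "i \<le> t" for i using that rk unfolding rk'_def by auto
  have beyond: "(\<forall>j. mat_app (*) (rk' (i - 1)) (rk' i) (d i) v j = 0) \<longleftrightarrow>
      (\<exists>w\<in>fvecs (rk' (i + 1)). v = mat_app (*) (rk' i) (rk' (i + 1)) (d (i + 1)) w)"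
    if "i \<ge> t" "v \<in> fvecs (rk' i)" for i and v :: "nat \<Rightarrow> 'a"
  proof -
    have "rk' i = 0" using that(1) rk unfolding rk'_def by auto
    then have "v = 0" and "mat_app (*) (rk' i) (rk' (i + 1)) (d (i + 1)) 0 = 0"
      using that(2) unfolding fvecs_def mat_app_def by (auto simp: fun_eq_iff)
    moreover have "(0 :: nat \<Rightarrow> 'a) \<in> fvecs (rk' (i + 1))" unfolding fvecs_def by simp
    ultimately show ?thesis
      using \<open>rk' i = 0\<close> unfolding mat_app_def by fastforce
  qed
  have "is_free_res s rk' d e"
    unfolding is_free_res_def
  proof (intro conjI allI impI ballI)
    show "\<exists>v\<in>fvecs (rk' 0). (\<Sum>l<rk' 0. s (v l) (e l)) = x" for x
      using res same[of 0] unfolding is_free_res_def by simp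
    show "(\<Sum>l<rk' 0. s (v l) (e l)) = 0 \<longleftrightarrow>
        (\<exists>w\<in>fvecs (rk' 1). v = mat_app (*) (rk' 0) (rk' 1) (d 1) w)"
      if "v \<in> fvecs (rk' 0)" for v
      using res that same[of 0] same[of 1] t unfolding is_free_res_def by simp
  next
    fix i and v :: "nat \<Rightarrow> 'a" assume i: "1 \<le> i" and v: "v \<in> fvecs (rk' i)"
    show "(\<forall>j. mat_app (*) (rk' (i - 1)) (rk' i) (d i) v j = 0) \<longleftrightarrow>
        (\<exists>w\<in>fvecs (rk' (i + 1)). v = mat_app (*) (rk' i) (rk' (i + 1)) (d (i + 1)) w)"
    proof (cases "i < t")
      case True
      then have "rk' (i - 1) = rk (i - 1)" "rk' i = rk i" "rk' (i + 1) = rk (i + 1)" using same by auto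
      then show ?thesis using res i v unfolding is_free_res_def by simp
    next
      case False
      then show ?thesis using beyond v by simp
    qed
  qed
  then show ?thesis unfolding rk'_def .
qed

lemma proj_dim_le_if_has_free_res_len:
  assumes "has_free_res_len s L"
  shows "proj_dim s \<le> ereal (real L)"
  using assms unfolding proj_dim_def by (auto intro: Inf_lower)

theorem corollary3p13:
  fixes m :: "'a::comm_ring_1 set"
    and sX :: "'a \<Rightarrow> 'x::ab_group_add \<Rightarrow> 'x"
    and sM :: "'a \<Rightarrow> 'm::ab_group_add \<Rightarrow> 'm"
    and N :: "'x set"
    and t :: nat
  assumes "noetherian_ring TYPE('a)"
    and "local_ring TYPE('a)"
    and "maximal_ideal m"
    and "fin_gen_module sX"
    and "burch_submodule sX m N"
    and "t \<ge> 1"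
    and "fin_gen_module sM"
    and "tor_zero sM sX t N {0}"
    and "tor_zero sM sX t UNIV N"
  shows "proj_dim sM < ereal (real t)"
proof -
  obtain rk d e where res: "is_free_res sM rk d e"
    and min: "\<forall>i\<ge>1. \<forall>j<rk (i - 1). \<forall>l<rk i. d i j l \<in> m"
    using exists_minimal_free_res[OF assms(1-3,7)] by blast
  have "module sX" using assms(4) unfolding fin_gen_module_def by blast
  then have "rk t = 0"
    using is_free_res_rank_eq_0_if_burch[OF _ res assms(6) _ _ assms(5,8,9)] min assms(6) by simp
  then have "has_free_res_len sM (t - 1)"
    using is_free_res_truncate[OF res assms(6)] unfolding has_free_res_len_def by fastforce
  then have "proj_dim sM \<le> ereal (real (t - 1))" by (rule proj_dim_le_if_has_free_res_len)
  also have "\<dots> < ereal (real t)" using assms(6) by simp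
  finally show ?thesis .
qed

end
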